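(* Let $f(x)=\log(1-x)$ or $f(x)=\log(1+x)$, and let $\lambda>-\tfrac12$, $\lambda\ne0$. Then for each $n\ge1$ the Gegenbauer coefficients of $f$ are \[ a_n^\lambda=\mu_n\,\frac{4^\lambda\Gamma(\lambda)\Gamma(\lambda+\frac12)}{\sqrt\pi}\cdot\frac{\Gamma(n+1)\Gamma(n+\lambda+1)}{n\,\Gamma(n+\lambda)\Gamma(n+1+2\lambda)}, \] where $\mu_n=-1$ for $f(x)=\log(1-x)$ and $\mu_n=(-1)^{n+1}$ for $f(x)=\log(1+x)$.
   Context: $C_n^{(\lambda)}$ is the Gegenbauer polynomial normalized by $C_n^{(\lambda)}(1)=\Gamma(n+2\lambda)/(n!\,\Gamma(2\lambda))$, orthogonal on $[-1,1]$ with weight $(1-x^2)^{\lambda-1/2}$, with $h_n^{(\lambda)}=\frac{2^{1-2\lambda}\pi}{\Gamma(\lambda)^2}\frac{\Gamma(n+2\lambda)}{\Gamma(n+1)(n+\lambda)}$; the Gegenbauer coefficients are $a_n^{\lambda}=\frac{1}{h_n^{(\lambda)}}\int_{-1}^1(1-x^2)^{\lambda-1/2}f(x)C_n^{(\lambda)}(x)\,dx$. *)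

theory Defs
  imports "HOL-Analysis.Analysis"
begin

text \<open>This gives the normalization C_n(1) = Gamma(n+2 lambda)/(n! Gamma(2 lambda)).\<close>
fun gegenbauer :: "real \<Rightarrow> nat \<Rightarrow> real \<Rightarrow> real" where
  "gegenbauer l 0 x = 1"
| "gegenbauer l (Suc 0) x = 2 * l * x"
| "gegenbauer l (Suc (Suc n)) x =
     (2 * x * (real n + 1 + l) * gegenbauer l (Suc n) x
      - (real n + 2 * l) * gegenbauer l n x) / (real n + 2)"

definition gegenbauer_h :: "real \<Rightarrow> nat \<Rightarrow> real" where
  "gegenbauer_h l n =
     (2 powr (1 - 2 * l) * pi / (Gamma l)^2) *
     (Gamma (real n + 2 * l) / (Gamma (real n + 1) * (real n + l)))"

definition gegenbauer_coeff :: "real \<Rightarrow> (real \<Rightarrow> real) \<Rightarrow> nat \<Rightarrow> real" where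
  "gegenbauer_coeff l f n =
     (1 / gegenbauer_h l n) *
     (LBINT x=-1..1. (1 - x^2) powr (l - 1/2) * f x * gegenbauer l n x)"

end

theory Submission
  imports Defs
begin

text \<open>
  Write w(x) = (1 - x^2)^(\<lambda>-1/2) and s = \<plusminus>1. In self-adjoint form the Gegenbauer equation reads
  ((1 - x^2)^(\<lambda>+1/2) C_n')' = -n (n + 2\<lambda>) w C_n. Integrating by parts against ln (1 - s x), whose
  derivative times 1 - x^2 is -s (1 + s x), and noting that the boundary terms vanish because
  (1 - x^2)^(\<lambda>+1/2) ln (1 - s x) tends to 0 at \<plusminus>1, gives
  n (n + 2\<lambda>) \<integral> w C_n ln (1 - s x) = -s \<integral> w (1 + s x) C_n'.
  Since C_(n+1)' - C_(n-1)' = 2 (n + \<lambda>) C_n and C_n is orthogonal to 1 and x for n \<ge> 2, the last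
  integral equals s^(n-1) 2\<lambda> \<integral> w, and \<integral> w = \<surd>\<pi> \<Gamma>(\<lambda> + 1/2) / \<Gamma>(\<lambda> + 1) is a Beta integral
  evaluated by Legendre's duplication formula.
\<close>

fun gegenbauer_deriv :: "real \<Rightarrow> nat \<Rightarrow> real \<Rightarrow> real" where
  "gegenbauer_deriv l 0 x = 0"
| "gegenbauer_deriv l (Suc 0) x = 2 * l"
| "gegenbauer_deriv l (Suc (Suc n)) x =
     (2 * (real n + 1 + l) * gegenbauer l (Suc n) x
      + 2 * x * (real n + 1 + l) * gegenbauer_deriv l (Suc n) x
      - (real n + 2 * l) * gegenbauer_deriv l n x) / (real n + 2)"

lemma has_real_derivative_gegenbauer:
  "(gegenbauer l n has_real_derivative gegenbauer_deriv l n x) (at x)"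
proof (induction l n x rule: gegenbauer.induct)
  case (3 l n x)
  have "gegenbauer l (Suc (Suc n)) = (\<lambda>x. (1 / (real n + 2)) *
      (2 * x * (real n + 1 + l) * gegenbauer l (Suc n) x - (real n + 2 * l) * gegenbauer l n x))"
    by (rule ext) simp
  then show ?case
    using 3 by (auto intro!: derivative_eq_intros simp: divide_simps)
qed (auto intro!: derivative_eq_intros)

lemma isCont_gegenbauer: "isCont (gegenbauer l n) x"
  using has_real_derivative_gegenbauer by (rule DERIV_isCont)

lemma isCont_gegenbauer_deriv: "isCont (gegenbauer_deriv l n) x"
proof (induction l n x rule: gegenbauer_deriv.induct)
  case (3 l n x)
  have "gegenbauer_deriv l (Suc (Suc n)) = (\<lambda>x. (2 * (real n + 1 + l) * gegenbauer l (Suc n) x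
      + 2 * x * (real n + 1 + l) * gegenbauer_deriv l (Suc n) x
      - (real n + 2 * l) * gegenbauer_deriv l n x) / (real n + 2))"
    by (rule ext) simp
  then show ?case
    using 3 by (auto intro!: continuous_intros isCont_gegenbauer)
qed auto

lemma continuous_on_gegenbauer [continuous_intros]: "continuous_on A (gegenbauer l n)"
  by (intro continuous_at_imp_continuous_on ballI isCont_gegenbauer)

lemma continuous_on_gegenbauer_deriv [continuous_intros]: "continuous_on A (gegenbauer_deriv l n)"
  by (intro continuous_at_imp_continuous_on ballI isCont_gegenbauer_deriv)

lemma gegenbauer_deriv_recurrences:
  "x * gegenbauer_deriv l (Suc m) x - gegenbauer_deriv l m x = real (Suc m) * gegenbauer l (Suc m) x \<and>
   (1 - x^2) * gegenbauer_deriv l (Suc m) x =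
     (real m + 2 * l) * gegenbauer l m x - real (Suc m) * x * gegenbauer l (Suc m) x"
proof (induction m)
  case 0
  then show ?case by (simp add: power2_eq_square algebra_simps)
next
  case (Suc m)
  define c0 c1 d0 d1 where "c0 = gegenbauer l m x" and "c1 = gegenbauer l (Suc m) x"
    and "d0 = gegenbauer_deriv l m x" and "d1 = gegenbauer_deriv l (Suc m) x"
  have pred: "d0 = x * d1 - real (Suc m) * c1"
    and ode: "(1 - x^2) * d1 = (real m + 2 * l) * c0 - real (Suc m) * x * c1"
    using Suc.IH unfolding c0_def c1_def d0_def d1_def by auto
  have c2: "gegenbauer l (Suc (Suc m)) x =
      (2 * x * (real m + 1 + l) * c1 - (real m + 2 * l) * c0) / (real m + 2)"
    by (simp add: c0_def c1_def)
  have d2: "gegenbauer_deriv l (Suc (Suc m)) x = (real m + 1 + 2 * l) * c1 + x * d1"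
    by (simp add: c1_def d1_def pred[unfolded d0_def c1_def d1_def] field_simps)
  have "(real m + 2) * ((1 - x^2) * d1) =
      (real m + 2) * ((real m + 2 * l) * c0 - real (Suc m) * x * c1)"
    and "x * (real m + 2) * ((1 - x^2) * d1) =
      x * (real m + 2) * ((real m + 2 * l) * c0 - real (Suc m) * x * c1)"
    using ode by simp_all
  then show ?case
    unfolding d2 c2 d1_def[symmetric] c1_def[symmetric]
    by (simp add: field_simps power2_eq_square)
qed

lemma gegenbauer_deriv_pred:
  "gegenbauer_deriv l m x = x * gegenbauer_deriv l (Suc m) x - real (Suc m) * gegenbauer l (Suc m) x"
  using gegenbauer_deriv_recurrences[of x l m] by linarith

lemma gegenbauer_ode:
  "(1 - x^2) * gegenbauer_deriv l (Suc m) x =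
     (real m + 2 * l) * gegenbauer l m x - real (Suc m) * x * gegenbauer l (Suc m) x"
  using gegenbauer_deriv_recurrences[of x l m] by blast

lemma gegenbauer_deriv_Suc_Suc:
  "gegenbauer_deriv l (Suc (Suc m)) x =
     gegenbauer_deriv l m x + 2 * (real m + 1 + l) * gegenbauer l (Suc m) x"
  by (simp add: gegenbauer_deriv_pred[of l m] field_simps)

lemma interval_integral_minus_one_one:
  "(LBINT x=-1..1. f x) = (LBINT x:{-1<..<1::real}. f x)"
proof -
  have "einterval (-1) 1 = {-1<..<1::real}"
    by (auto simp: einterval_def one_ereal_def)
  then show ?thesis
    by (subst interval_lebesgue_integral_le_eq) (auto simp: one_ereal_def)
qed

lemma set_integral_open_interval_FTC:
  fixes F f :: "real \<Rightarrow> real"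
  assumes "a < b"
    and deriv: "\<And>x. x \<in> {a<..<b} \<Longrightarrow> (F has_real_derivative f x) (at x)"
    and cont: "continuous_on {a<..<b} f"
    and int: "set_integrable lborel {a<..<b} f"
    and lim_a: "(F \<longlongrightarrow> A) (at_right a)" and lim_b: "(F \<longlongrightarrow> B) (at_left b)"
  shows "(LBINT x:{a<..<b}. f x) = B - A"
proof -
  have eint: "einterval (ereal a) (ereal b) = {a<..<b}"
    by (auto simp: einterval_def)
  have "(LBINT x=ereal a..ereal b. f x) = B - A"
  proof (rule interval_integral_FTC_integrable)
    fix x assume "ereal a < ereal x" "ereal x < ereal b"
    then have x: "x \<in> {a<..<b}" by simp
    show "(F has_vector_derivative f x) (at x)"
      using deriv[OF x] by (simp add: has_real_derivative_iff_has_vector_derivative)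
    show "isCont f x"
      using cont x by (simp add: continuous_on_eq_continuous_at)
  qed (use assms eint in \<open>auto simp: ereal_tendsto_simps1\<close>)
  then show ?thesis
    using \<open>a < b\<close> by (simp add: interval_lebesgue_integral_le_eq eint)
qed

lemma one_minus_square_powr_integral:
  fixes r :: real
  assumes "r > -1"
  shows "set_integrable lborel {-1<..<1} (\<lambda>x. (1 - x^2) powr r)"
    and "(LBINT x:{-1<..<1}. (1 - x^2) powr r) = 2 * 4 powr r * Beta (r + 1) (r + 1)"
proof -
  define B where
    "B = (\<lambda>t::real. indicator {0..1} t * (t powr (r + 1 - 1) * (1 - t) powr (r + 1 - 1)))"
  have int_B: "integrable lborel B"
    using integrable_Beta[of "r + 1" "r + 1"] assms unfolding set_integrable_def B_def by simp
  have integral_B: "integral\<^sup>L lborel B = Beta (r + 1) (r + 1)"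
    using set_borel_integral_eq_integral(2)[OF integrable_Beta[of "r + 1" "r + 1"]]
      has_integral_Beta_real[of "r + 1" "r + 1"] assms
    unfolding B_def set_lebesgue_integral_def by (simp add: integral_unique)
  have B_affine: "B (1/2 + 1/2 * x) = 4 powr (-r) * (indicator {-1<..<1} x * (1 - x^2) powr r)" for x
  proof (cases "x \<in> {-1<..<1}")
    case True
    have "(1/2 + 1/2 * x) powr r * (1 - (1/2 + 1/2 * x)) powr r =
        ((1/2 + 1/2 * x) * (1 - (1/2 + 1/2 * x))) powr r"
      by (simp add: powr_mult)
    also have "(1/2 + 1/2 * x) * (1 - (1/2 + 1/2 * x)) = (1 - x^2) / 4"
      by (simp add: field_simps power2_eq_square)
    also have "((1 - x^2) / 4) powr r = 4 powr (-r) * (1 - x^2) powr r"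
      unfolding powr_divide powr_minus by (simp add: divide_inverse mult.commute)
    finally show ?thesis
      using True by (simp add: B_def)
  next
    case False
    then have "x \<le> -1 \<or> x \<ge> 1" by auto
    then show ?thesis
      using False by (auto simp: B_def indicator_def)
  qed
  have "integrable lborel (\<lambda>x. B (1/2 + 1/2 * x))"
    by (rule lborel_integrable_real_affine[OF int_B]) simp
  then have "integrable lborel
      (\<lambda>x. 4 powr r * (4 powr (-r) * (indicator {-1<..<1} x * (1 - x^2) powr r)))"
    unfolding B_affine by (rule integrable_mult_right)
  then show "set_integrable lborel {-1<..<1} (\<lambda>x. (1 - x^2) powr r)"
    unfolding set_integrable_def by (simp add: powr_minus)
  have "Beta (r + 1) (r + 1) = 1/2 * integral\<^sup>L lborel (\<lambda>x. B (1/2 + 1/2 * x))"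
    using lborel_integral_real_affine[of "1/2" B "1/2"] integral_B by simp
  also have "\<dots> = 1/2 * 4 powr (-r) * (LBINT x:{-1<..<1}. (1 - x^2) powr r)"
    unfolding B_affine set_lebesgue_integral_def by simp
  finally show "(LBINT x:{-1<..<1}. (1 - x^2) powr r) = 2 * 4 powr r * Beta (r + 1) (r + 1)"
    by (simp add: powr_minus field_simps)
qed

lemma set_integrable_power_bound:
  fixes f :: "real \<Rightarrow> real"
  assumes "r > -1" and "continuous_on {-1<..<1} f"
    and bound: "\<And>x. x \<in> {-1<..<1} \<Longrightarrow> \<bar>f x\<bar> \<le> c * (1 - x^2) powr r"
  shows "set_integrable lborel {-1<..<1} f"
proof (rule set_integrable_bound)
  show "set_integrable lborel {-1<..<1} (\<lambda>x. c * (1 - x^2) powr r)"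
    using one_minus_square_powr_integral(1)[OF \<open>r > -1\<close>] by (rule set_integrable_mult_right)
  show "set_borel_measurable lborel {-1<..<1} f"
    using borel_measurable_continuous_on_indicator[OF _ \<open>continuous_on {-1<..<1} f\<close>]
    by (simp add: set_borel_measurable_def)
  show "AE x in lborel. x \<in> {-1<..<1} \<longrightarrow> norm (f x) \<le> norm (c * (1 - x^2) powr r)"
  proof (intro AE_I2 impI)
    fix x assume "x \<in> {-1<..<1::real}"
    then show "norm (f x) \<le> norm (c * (1 - x^2) powr r)"
      using bound[of x] by (smt (verit) abs_ge_self real_norm_def)
  qed
qed

lemma Gamma_legendre_duplication_real:
  fixes a :: real
  assumes "a > 0"
  shows "Gamma a * Gamma (a + 1/2) = 2 powr (1 - 2 * a) * sqrt pi * Gamma (2 * a)"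
proof -
  have "complex_of_real a \<notin> \<int>\<^sub>\<le>\<^sub>0" "complex_of_real a + 1/2 \<notin> \<int>\<^sub>\<le>\<^sub>0"
    using assms by (auto simp: nonpos_Ints_def complex_eq_iff)
  then have "Gamma (complex_of_real a) * Gamma (complex_of_real a + 1/2) =
      exp ((1 - 2 * complex_of_real a) * of_real (ln 2)) * of_real (sqrt pi) * Gamma (2 * complex_of_real a)"
    by (rule Gamma_legendre_duplication)
  also have "exp ((1 - 2 * complex_of_real a) * of_real (ln 2)) = of_real (2 powr (1 - 2 * a))"
    by (simp add: powr_def exp_of_real[symmetric])
  finally have "complex_of_real (Gamma a * Gamma (a + 1/2)) =
      complex_of_real (2 powr (1 - 2 * a) * sqrt pi * Gamma (2 * a))"
    by (simp add: Gamma_complex_of_real[symmetric])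
  then show ?thesis
    by (simp only: of_real_eq_iff)
qed

definition weighted_integrable :: "real \<Rightarrow> (real \<Rightarrow> real) \<Rightarrow> bool" where
  "weighted_integrable l g \<longleftrightarrow>
     set_integrable lborel {-1<..<1} (\<lambda>x. (1 - x^2) powr (l - 1/2) * g x)"

definition weighted_integral :: "real \<Rightarrow> (real \<Rightarrow> real) \<Rightarrow> real" where
  "weighted_integral l g = (LBINT x:{-1<..<1}. (1 - x^2) powr (l - 1/2) * g x)"

lemma one_minus_square_pos: "x \<in> {-1<..<1} \<Longrightarrow> 0 < 1 - (x::real)^2"
  by (simp add: abs_square_less_1 abs_less_iff)

lemma weighted_integrable_bound:
  assumes "continuous_on {-1<..<1} g" and "d < l + 1/2"
    and bound: "\<And>x. x \<in> {-1<..<1} \<Longrightarrow> \<bar>g x\<bar> \<le> c * (1 - x^2) powr (-d)"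
  shows "weighted_integrable l g"
  unfolding weighted_integrable_def
proof (rule set_integrable_power_bound)
  show "l - 1/2 - d > -1"
    using assms(2) by simp
  show "continuous_on {-1<..<1} (\<lambda>x. (1 - x^2) powr (l - 1/2) * g x)"
    using assms(1) by (auto intro!: continuous_intros simp: abs_square_eq_1)
  fix x :: real assume x: "x \<in> {-1<..<1}"
  have "\<bar>(1 - x^2) powr (l - 1/2) * g x\<bar> = (1 - x^2) powr (l - 1/2) * \<bar>g x\<bar>"
    by (simp add: abs_mult)
  also have "\<dots> \<le> (1 - x^2) powr (l - 1/2) * (c * (1 - x^2) powr (-d))"
    using bound[OF x] by (rule mult_left_mono) simp
  also have "\<dots> = c * (1 - x^2) powr (l - 1/2 - d)"
    by (simp add: powr_add[symmetric])
  finally show "\<bar>(1 - x^2) powr (l - 1/2) * g x\<bar> \<le> c * (1 - x^2) powr (l - 1/2 - d)" .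
qed

lemma weighted_integrable_continuous:
  assumes "l > -1/2" and "continuous_on {-1..1} g"
  shows "weighted_integrable l g"
proof -
  obtain c where c: "\<And>x. x \<in> {-1..1} \<Longrightarrow> norm (g x) \<le> c"
    using continuous_on_compact_bound[OF compact_Icc assms(2)] by blast
  show ?thesis
  proof (rule weighted_integrable_bound[where d = 0 and c = c])
    show "continuous_on {-1<..<1} g"
      using assms(2) by (rule continuous_on_subset) auto
    show "\<bar>g x\<bar> \<le> c * (1 - x^2) powr (-0)" if "x \<in> {-1<..<1}" for x
      using c[of x] that one_minus_square_pos[OF that] by simp
  qed (use assms(1) in simp)
qed

lemma weighted_integrable_cong:
  "(\<And>x. x \<in> {-1<..<1} \<Longrightarrow> g x = h x) \<Longrightarrow> weighted_integrable l g = weighted_integrable l h"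
  unfolding weighted_integrable_def by (rule set_integrable_cong) auto

lemma weighted_integral_cong:
  "(\<And>x. x \<in> {-1<..<1} \<Longrightarrow> g x = h x) \<Longrightarrow> weighted_integral l g = weighted_integral l h"
  unfolding weighted_integral_def by (rule set_lebesgue_integral_cong) auto

lemma weighted_integral_cmult: "weighted_integral l (\<lambda>x. c * g x) = c * weighted_integral l g"
  unfolding weighted_integral_def by (simp add: mult.left_commute)

lemma weighted_integral_linear:
  assumes "l > -1/2" and "continuous_on {-1..1} g" and "continuous_on {-1..1} h"
  shows "weighted_integral l (\<lambda>x. a * g x + b * h x) = a * weighted_integral l g + b * weighted_integral l h"
proof -
  have "weighted_integrable l (\<lambda>x. a * g x)" and "weighted_integrable l (\<lambda>x. b * h x)"
    using assms by (auto intro!: weighted_integrable_continuous continuous_intros)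
  then show ?thesis
    unfolding weighted_integrable_def weighted_integral_def
    by (simp add: distrib_left set_integral_add set_integral_mult_right mult.left_commute)
qed

lemma four_powr: "(4::real) powr a = 2 powr (2 * a)"
  by (simp add: powr_powr[symmetric])

lemma weighted_integral_one:
  assumes "l > -1/2"
  shows "weighted_integral l (\<lambda>_. 1) = sqrt pi * Gamma (l + 1/2) / Gamma (l + 1)"
proof -
  define a b c where "a = Gamma (l + 1/2)" and "b = Gamma (l + 1)" and "c = Gamma (2 * l + 1)"
  have pos: "a > 0" "b > 0" "c > 0"
    using assms by (simp_all add: a_def b_def c_def)
  have dup: "a * b = 2 powr (-2 * l) * sqrt pi * c"
    using Gamma_legendre_duplication_real[of "l + 1/2"] assms
    by (simp add: a_def b_def c_def algebra_simps)
  have "weighted_integral l (\<lambda>_. 1) = 2 * 4 powr (l - 1/2) * Beta (l + 1/2) (l + 1/2)"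
    using one_minus_square_powr_integral(2)[of "l - 1/2"] assms
    by (simp add: weighted_integral_def add_ac)
  also have "\<dots> = 2 * 2 powr (2 * l - 1) * a * a / c"
    by (simp add: Beta_def four_powr a_def c_def algebra_simps)
  also have "\<dots> = sqrt pi * a / b"
  proof -
    have "2 * 2 powr (2 * l - 1) * (a * b) = (2 * 2 powr (2 * l - 1) * 2 powr (-2 * l)) * (sqrt pi * c)"
      by (simp add: dup mult_ac)
    also have "2 * 2 powr (2 * l - 1) * 2 powr (-2 * l) = (1::real)"
      by (simp add: powr_add[symmetric] powr_diff)
    finally show ?thesis
      using pos by (simp add: field_simps)
  qed
  finally show ?thesis
    by (simp add: a_def b_def)
qed

lemma gegenbauer_self_adjoint_ode:
  assumes x: "x \<in> {-1<..<1}"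
  shows "((\<lambda>x. (1 - x^2) powr (l + 1/2) * gegenbauer_deriv l (Suc m) x) has_real_derivative
      - (real (Suc m) * (real (Suc m) + 2 * l)) * ((1 - x^2) powr (l - 1/2) * gegenbauer l (Suc m) x))
    (at x)"
proof -
  define n k where "n = real (Suc m)" and "k = real m + 2 * l"
  have "k = n - 1 + 2 * l"
    by (simp add: n_def k_def)
  define C C0 D where "C = gegenbauer l (Suc m)" and "C0 = gegenbauer l m"
    and "D = gegenbauer_deriv l (Suc m)"
  \<comment> \<open>On the open interval the flux equals \<open>Q\<close> by \<open>gegenbauer_ode\<close>; differentiating \<open>Q\<close>
    instead needs no second derivative of \<open>C\<close>.\<close>
  define Q where "Q y = (1 - y^2) powr (l - 1/2) * (k * C0 y - n * y * C y)" for y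
  have pos: "0 < 1 - x^2"
    using x by (rule one_minus_square_pos)
  have d_sq: "((\<lambda>y. 1 - y^2) has_real_derivative - 2 * x) (at x)"
    by (auto intro!: derivative_eq_intros)
  have dW: "((\<lambda>y. (1 - y^2) powr (l - 1/2)) has_real_derivative
      (l - 1/2) * (1 - x^2) powr (l - 1/2 - 1) * (- 2 * x)) (at x)"
    using DERIV_chain2[OF has_real_derivative_powr[OF pos, where r = "l - 1/2"] d_sq] by simp
  have dR: "((\<lambda>y. k * C0 y - n * y * C y) has_real_derivative
      k * gegenbauer_deriv l m x - n * (C x + x * D x)) (at x)"
    unfolding C_def C0_def D_def
    by (auto intro!: derivative_eq_intros has_real_derivative_gegenbauer simp: algebra_simps)
  have "(Q has_real_derivative
      (l - 1/2) * (1 - x^2) powr (l - 1/2 - 1) * (- 2 * x) * (k * C0 x - n * x * C x)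
      + (k * gegenbauer_deriv l m x - n * (C x + x * D x)) * (1 - x^2) powr (l - 1/2)) (at x)"
    unfolding Q_def by (rule DERIV_mult[OF dW dR])
  moreover have "(l - 1/2) * (1 - x^2) powr (l - 1/2 - 1) * (- 2 * x) * (k * C0 x - n * x * C x)
      + (k * gegenbauer_deriv l m x - n * (C x + x * D x)) * (1 - x^2) powr (l - 1/2)
      = - (n * (n + 2 * l)) * ((1 - x^2) powr (l - 1/2) * C x)"
  proof -
    have identity: "(l - 1/2) * w1 * (- 2 * x) * (k * c0 - n * x * c) + (k * d0 - n * (c + x * d)) * w
        = - (n * (n + 2 * l)) * (w * c)"
      if "w = w1 * (1 - x^2)" "(1 - x^2) * d = k * c0 - n * x * c" "d0 = x * d - n * c"
      for w w1 c c0 d d0 :: real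
      using that \<open>k = n - 1 + 2 * l\<close> by algebra
    show ?thesis
    proof (rule identity)
      show "(1 - x^2) powr (l - 1/2) = (1 - x^2) powr (l - 1/2 - 1) * (1 - x^2)"
        using powr_mult_base[of "1 - x^2" "l - 1/2 - 1"] pos by (simp add: mult.commute)
      show "(1 - x^2) * D x = k * C0 x - n * x * C x"
        unfolding C_def C0_def D_def n_def k_def by (rule gegenbauer_ode)
      show "gegenbauer_deriv l m x = x * D x - n * C x"
        unfolding C_def D_def n_def by (rule gegenbauer_deriv_pred)
    qed
  qed
  moreover have "(1 - y^2) powr (l + 1/2) * D y = Q y" if "y \<in> {-1<..<1}" for y
  proof -
    have "(1 - y^2) powr (l + 1/2) = (1 - y^2) powr (l - 1/2) * (1 - y^2)"
      using powr_mult_base[of "1 - y^2" "l - 1/2"] one_minus_square_pos[OF that]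
      by (simp add: mult.commute add_ac)
    then have "(1 - y^2) powr (l + 1/2) * D y = (1 - y^2) powr (l - 1/2) * ((1 - y^2) * D y)"
      by simp
    also have "(1 - y^2) * D y = k * C0 y - n * y * C y"
      unfolding C_def C0_def D_def n_def k_def by (rule gegenbauer_ode)
    finally show ?thesis
      unfolding Q_def .
  qed
  ultimately show ?thesis
    unfolding C_def D_def n_def
    by (metis (no_types, lifting) x open_greaterThanLessThan has_field_derivative_transform_within_open)
qed

lemma weighted_integral_gegenbauer_by_parts:
  fixes g g' :: "real \<Rightarrow> real"
  assumes deriv: "\<And>x. x \<in> {-1<..<1} \<Longrightarrow> (g has_real_derivative g' x) (at x)"
    and cont: "continuous_on {-1<..<1} g'"
    and int_C: "weighted_integrable l (\<lambda>x. gegenbauer l (Suc m) x * g x)"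
    and int_D: "weighted_integrable l (\<lambda>x. (1 - x^2) * gegenbauer_deriv l (Suc m) x * g' x)"
    and lim_left: "((\<lambda>x. (1 - x^2) powr (l + 1/2) * g x) \<longlongrightarrow> 0) (at_right (-1))"
    and lim_right: "((\<lambda>x. (1 - x^2) powr (l + 1/2) * g x) \<longlongrightarrow> 0) (at_left 1)"
  shows "real (Suc m) * (real (Suc m) + 2 * l) * weighted_integral l (\<lambda>x. gegenbauer l (Suc m) x * g x)
       = weighted_integral l (\<lambda>x. (1 - x^2) * gegenbauer_deriv l (Suc m) x * g' x)"
proof -
  define S where "S = {-1<..<1::real}"
  define N where "N = real (Suc m) * (real (Suc m) + 2 * l)"
  define C D where "C = gegenbauer l (Suc m)" and "D = gegenbauer_deriv l (Suc m)"
  define W where "W x = (1 - x^2) powr (l - 1/2)" for x :: real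
  define P where "P x = (1 - x^2) powr (l + 1/2) * D x" for x :: real
  define f where "f x = W x * ((1 - x^2) * D x * g' x) - N * (W x * (C x * g x))" for x
  have P_eq: "P x = W x * (1 - x^2) * D x" if "x \<in> S" for x
    using powr_mult_base[of "1 - x^2" "l - 1/2"] one_minus_square_pos[of x] that
    by (simp add: P_def W_def S_def mult_ac add_ac)
  have deriv_Pg: "((\<lambda>x. P x * g x) has_real_derivative f x) (at x)" if x: "x \<in> S" for x
  proof -
    have "((\<lambda>x. P x * g x) has_real_derivative (- N * (W x * C x)) * g x + g' x * P x) (at x)"
      unfolding P_def N_def W_def C_def D_def
      by (rule DERIV_mult[OF gegenbauer_self_adjoint_ode deriv]) (use x in \<open>simp_all add: S_def\<close>)
    then show ?thesis
      using P_eq[OF x] by (simp add: f_def algebra_simps)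
  qed
  have cont_g: "continuous_on S g"
    using deriv by (intro continuous_at_imp_continuous_on ballI DERIV_isCont) (auto simp: S_def)
  have cont_f: "continuous_on S f"
    unfolding f_def W_def C_def D_def
    using cont[folded S_def] cont_g
    by (auto simp: S_def abs_square_eq_1 intro!: continuous_intros)
  have int_f: "set_integrable lborel S f"
    using int_C int_D unfolding f_def W_def C_def D_def S_def weighted_integrable_def
    by (intro set_integral_diff(1) set_integrable_mult_right) (simp_all add: mult_ac)
  have "(D \<longlongrightarrow> D a) (at a within A)" for a A
    unfolding D_def by (rule tendsto_within_subset[OF isCont_gegenbauer_deriv[unfolded isCont_def]]) simp
  then have "((\<lambda>x. D x * ((1 - x^2) powr (l + 1/2) * g x)) \<longlongrightarrow> D (-1) * 0) (at_right (-1))"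
    and "((\<lambda>x. D x * ((1 - x^2) powr (l + 1/2) * g x)) \<longlongrightarrow> D 1 * 0) (at_left 1)"
    by (intro tendsto_mult lim_left lim_right; simp)+
  then have lim_Pg: "((\<lambda>x. P x * g x) \<longlongrightarrow> 0) (at_right (-1))"
    "((\<lambda>x. P x * g x) \<longlongrightarrow> 0) (at_left 1)"
    by (simp_all add: P_def mult_ac)
  have "(LBINT x:S. f x) = 0 - 0"
    unfolding S_def
    by (rule set_integral_open_interval_FTC) (use deriv_Pg cont_f int_f lim_Pg in \<open>simp_all add: S_def\<close>)
  moreover have "(LBINT x:S. f x) = weighted_integral l (\<lambda>x. (1 - x^2) * D x * g' x)
      - N * weighted_integral l (\<lambda>x. C x * g x)"
    using int_C int_D unfolding f_def S_def weighted_integral_def weighted_integrable_def W_def C_def D_def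
    by (simp add: set_integral_diff set_integral_mult_right mult_ac)
  ultimately show ?thesis
    by (simp add: N_def C_def D_def)
qed

lemma one_minus_square_powr_tendsto_zero:
  assumes "(e::real) > 0"
  shows "((\<lambda>x. (1 - x^2) powr e) \<longlongrightarrow> 0) (at_left 1)"
    and "((\<lambda>x. (1 - x^2) powr e) \<longlongrightarrow> 0) (at_right (-1))"
proof -
  have lim_left: "((\<lambda>x. 1 - x^2) \<longlongrightarrow> (1 - 1^2::real)) (at_left 1)"
    and lim_right: "((\<lambda>x. 1 - x^2) \<longlongrightarrow> (1 - (-1)^2::real)) (at_right (-1))"
    by (intro tendsto_intros)+
  have "eventually (\<lambda>x. 0 \<le> 1 - x^2) (at_left (1::real))"
    and "eventually (\<lambda>x. 0 \<le> 1 - x^2) (at_right (-1::real))"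
    using eventually_at_left_real[of "-1" 1] eventually_at_right_real[of "-1" 1]
    by (auto elim!: eventually_mono simp: abs_square_le_1 abs_le_iff)
  then show "((\<lambda>x. (1 - x^2) powr e) \<longlongrightarrow> 0) (at_left 1)"
    and "((\<lambda>x. (1 - x^2) powr e) \<longlongrightarrow> 0) (at_right (-1))"
    using tendsto_powr'[OF lim_left tendsto_const[of e]] tendsto_powr'[OF lim_right tendsto_const[of e]] assms
    by auto
qed

lemma weighted_integral_gegenbauer:
  assumes "l > -1/2"
  shows "weighted_integral l (gegenbauer l (Suc m)) = 0"
proof -
  have "real (Suc m) * (real (Suc m) + 2 * l) * weighted_integral l (\<lambda>x. gegenbauer l (Suc m) x * 1)
      = weighted_integral l (\<lambda>x. (1 - x^2) * gegenbauer_deriv l (Suc m) x * 0)"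
  proof (rule weighted_integral_gegenbauer_by_parts)
    show "weighted_integrable l (\<lambda>x. gegenbauer l (Suc m) x * 1)"
      "weighted_integrable l (\<lambda>x. (1 - x^2) * gegenbauer_deriv l (Suc m) x * 0)"
      using assms by (auto intro!: weighted_integrable_continuous continuous_intros)
    show "((\<lambda>x. (1 - x^2) powr (l + 1/2) * 1) \<longlongrightarrow> 0) (at_right (-1))"
      "((\<lambda>x. (1 - x^2) powr (l + 1/2) * 1) \<longlongrightarrow> 0) (at_left 1)"
      using one_minus_square_powr_tendsto_zero[of "l + 1/2"] assms by simp_all
  qed auto
  moreover have "real (Suc m) * (real (Suc m) + 2 * l) \<noteq> 0"
    using assms by (simp add: add_pos_pos)
  ultimately show ?thesis
    by (simp add: weighted_integral_def)
qed

lemma abs_ln_le_powr: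
  fixes y d :: real
  assumes y: "0 < y" "y \<le> 2" and d: "d > 0"
  shows "\<bar>ln y\<bar> \<le> (1/d + 2 powr d) * y powr (-d)"
proof (cases "y \<le> 1")
  case True
  have "d * (- ln y) = ln (y powr (-d))"
    using y by (simp add: ln_powr)
  also have "\<dots> \<le> y powr (-d) - 1"
    using y by (intro ln_le_minus_one) simp
  finally have "- ln y \<le> 1/d * y powr (-d)"
    using d by (simp add: field_simps)
  moreover have "ln y \<le> 0" and "0 \<le> 2 powr d * y powr (-d)"
    using True y by simp_all
  ultimately have "\<bar>ln y\<bar> \<le> 1/d * y powr (-d) + 2 powr d * y powr (-d)"
    by linarith
  then show ?thesis
    by (simp add: distrib_right)
next
  case False
  have "ln y \<le> y - 1"
    using y by (intro ln_le_minus_one) simp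
  also have "\<dots> \<le> 2 powr d * 2 powr (-d)"
    using y by (simp add: powr_add[symmetric])
  also have "\<dots> \<le> 2 powr d * y powr (-d)"
    using y d by (intro mult_left_mono powr_mono2') auto
  finally have "ln y \<le> 2 powr d * y powr (-d)" .
  moreover have "0 \<le> ln y" and "0 \<le> 1/d * y powr (-d)"
    using False d by simp_all
  ultimately have "\<bar>ln y\<bar> \<le> 1/d * y powr (-d) + 2 powr d * y powr (-d)"
    by linarith
  then show ?thesis
    by (simp add: distrib_right)
qed

lemma one_minus_mult_pos: "\<bar>s\<bar> = 1 \<Longrightarrow> x \<in> {-1<..<1} \<Longrightarrow> 0 < 1 - s * (x::real)"
  by (auto simp: abs_if split: if_splits)

lemma abs_ln_one_minus_le:
  fixes s x d :: real
  assumes s: "\<bar>s\<bar> = 1" and x: "x \<in> {-1<..<1}" and d: "d > 0"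
  shows "\<bar>ln (1 - s * x)\<bar> \<le> (1/d + 2 powr d) * 2 powr d * (1 - x^2) powr (-d)"
proof -
  have s_cases: "s = 1 \<or> s = -1"
    using s by auto
  then have y: "0 < 1 - s * x" "1 - s * x \<le> 2"
    using x by auto
  have lower: "(1 - x^2) / 2 \<le> 1 - s * x"
  proof -
    have "1 - s * x - (1 - x^2) / 2 = (1 - s * x)^2 / 2"
      using s_cases by (auto simp: power2_eq_square field_simps)
    moreover have "0 \<le> (1 - s * x)^2 / 2"
      by simp
    ultimately show ?thesis
      by linarith
  qed
  have "(1 - s * x) powr (-d) \<le> ((1 - x^2) / 2) powr (-d)"
    using lower d one_minus_square_pos[OF x] by (intro powr_mono2') auto
  also have "((1 - x^2) / 2) powr (-d) = 2 powr d * (1 - x^2) powr (-d)"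
    unfolding powr_divide powr_minus by (simp add: divide_inverse mult.commute)
  finally have "(1/d + 2 powr d) * (1 - s * x) powr (-d) \<le>
      (1/d + 2 powr d) * (2 powr d * (1 - x^2) powr (-d))"
    using d by (intro mult_left_mono) simp_all
  with abs_ln_le_powr[OF y d] show ?thesis
    by (simp add: mult.assoc)
qed

lemma weighted_integrable_mult_ln:
  assumes l: "l > -1/2" and s: "\<bar>s\<bar> = 1" and g: "continuous_on {-1..1} g"
  shows "weighted_integrable l (\<lambda>x. g x * ln (1 - s * x))"
proof -
  define d where "d = (l + 1/2) / 2"
  define c where "c = (1/d + 2 powr d) * 2 powr d"
  have d: "d > 0" "d < l + 1/2"
    using l by (simp_all add: d_def)
  obtain B where B: "\<And>x. x \<in> {-1..1} \<Longrightarrow> norm (g x) \<le> B"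
    using continuous_on_compact_bound[OF compact_Icc g] by blast
  show ?thesis
  proof (rule weighted_integrable_bound[OF _ d(2)])
    have "continuous_on {-1<..<1} g"
      using g by (rule continuous_on_subset) auto
    then show "continuous_on {-1<..<1} (\<lambda>x. g x * ln (1 - s * x))"
      by (intro continuous_intros) (use one_minus_mult_pos[OF s] in fastforce)+
    show "\<bar>g x * ln (1 - s * x)\<bar> \<le> B * c * (1 - x^2) powr (-d)" if "x \<in> {-1<..<1}" for x
      using B[of x] abs_ln_one_minus_le[OF s that d(1)] that
      by (auto simp: abs_mult mult.assoc c_def intro!: mult_mono)
  qed
qed

lemma one_minus_square_powr_mult_ln_tendsto_zero:
  assumes e: "(e::real) > 0" and s: "\<bar>s\<bar> = 1"
  shows "((\<lambda>x. (1 - x^2) powr e * ln (1 - s * x)) \<longlongrightarrow> 0) (at_right (-1))"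
    and "((\<lambda>x. (1 - x^2) powr e * ln (1 - s * x)) \<longlongrightarrow> 0) (at_left 1)"
proof -
  define d where "d = e / 2"
  define c where "c = (1/d + 2 powr d) * 2 powr d"
  have d: "d > 0" "e - d > 0"
    using e by (simp_all add: d_def)
  have "((\<lambda>x. (1 - x^2) powr e * ln (1 - s * x)) \<longlongrightarrow> 0) F"
    if lim: "((\<lambda>x. (1 - x^2) powr (e - d)) \<longlongrightarrow> 0) F" and ev: "eventually (\<lambda>x. x \<in> {-1<..<1}) F"
    for F
  proof (rule Lim_null_comparison)
    show "eventually (\<lambda>x. norm ((1 - x^2) powr e * ln (1 - s * x)) \<le> c * (1 - x^2) powr (e - d)) F"
      using ev
    proof (rule eventually_mono)
      fix x :: real assume x: "x \<in> {-1<..<1}"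
      have "norm ((1 - x^2) powr e * ln (1 - s * x)) \<le> (1 - x^2) powr e * (c * (1 - x^2) powr (-d))"
        using abs_ln_one_minus_le[OF s x d(1)] by (simp add: abs_mult mult_left_mono c_def)
      also have "\<dots> = c * (1 - x^2) powr (e - d)"
        by (simp add: powr_add[symmetric])
      finally show "norm ((1 - x^2) powr e * ln (1 - s * x)) \<le> c * (1 - x^2) powr (e - d)" .
    qed
    show "((\<lambda>x. c * (1 - x^2) powr (e - d)) \<longlongrightarrow> 0) F"
      using tendsto_mult_left_zero[OF lim] by (simp add: mult.commute)
  qed
  then show "((\<lambda>x. (1 - x^2) powr e * ln (1 - s * x)) \<longlongrightarrow> 0) (at_right (-1))"
    and "((\<lambda>x. (1 - x^2) powr e * ln (1 - s * x)) \<longlongrightarrow> 0) (at_left 1)"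
    using one_minus_square_powr_tendsto_zero[OF d(2)]
      eventually_at_right_real[of "-1" 1] eventually_at_left_real[of "-1" 1]
    by simp_all
qed

lemma weighted_integral_gegenbauer_ln:
  assumes l: "l > -1/2" and s: "\<bar>s\<bar> = 1"
  shows "real (Suc m) * (real (Suc m) + 2 * l) *
      weighted_integral l (\<lambda>x. gegenbauer l (Suc m) x * ln (1 - s * x))
    = - s * weighted_integral l (\<lambda>x. (1 + s * x) * gegenbauer_deriv l (Suc m) x)"
proof -
  have factor: "(1 - x^2) * gegenbauer_deriv l (Suc m) x * (- s / (1 - s * x))
      = - s * ((1 + s * x) * gegenbauer_deriv l (Suc m) x)" if "x \<in> {-1<..<1}" for x
  proof -
    have "s * s = 1"
      using s by (metis abs_mult_self_eq mult_1)
    then have "1 - x^2 = (1 - s * x) * (1 + s * x)"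
      by (simp add: power2_eq_square algebra_simps)
    then show ?thesis
      using one_minus_mult_pos[OF s that] by (simp add: field_simps)
  qed
  have "real (Suc m) * (real (Suc m) + 2 * l) *
      weighted_integral l (\<lambda>x. gegenbauer l (Suc m) x * ln (1 - s * x))
    = weighted_integral l (\<lambda>x. (1 - x^2) * gegenbauer_deriv l (Suc m) x * (- s / (1 - s * x)))"
  proof (rule weighted_integral_gegenbauer_by_parts)
    show "((\<lambda>x. ln (1 - s * x)) has_real_derivative - s / (1 - s * x)) (at x)"
      if "x \<in> {-1<..<1}" for x
      using one_minus_mult_pos[OF s that] by (auto intro!: derivative_eq_intros)
    show "continuous_on {-1<..<1} (\<lambda>x. - s / (1 - s * x))"
      using one_minus_mult_pos[OF s] by (intro continuous_intros) fastforce+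
    show "weighted_integrable l (\<lambda>x. gegenbauer l (Suc m) x * ln (1 - s * x))"
      using l s by (intro weighted_integrable_mult_ln continuous_intros)
    have "weighted_integrable l (\<lambda>x. - s * ((1 + s * x) * gegenbauer_deriv l (Suc m) x))"
      using l by (auto intro!: weighted_integrable_continuous continuous_intros)
    then show "weighted_integrable l (\<lambda>x. (1 - x^2) * gegenbauer_deriv l (Suc m) x * (- s / (1 - s * x)))"
      using factor by (subst weighted_integrable_cong) auto
    show "((\<lambda>x. (1 - x^2) powr (l + 1/2) * ln (1 - s * x)) \<longlongrightarrow> 0) (at_right (-1))"
      and "((\<lambda>x. (1 - x^2) powr (l + 1/2) * ln (1 - s * x)) \<longlongrightarrow> 0) (at_left 1)"
      using l s by (simp_all add: one_minus_square_powr_mult_ln_tendsto_zero)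
  qed
  also have "\<dots> = weighted_integral l (\<lambda>x. - s * ((1 + s * x) * gegenbauer_deriv l (Suc m) x))"
    using factor by (rule weighted_integral_cong)
  finally show ?thesis
    by (simp only: weighted_integral_cmult)
qed

lemma weighted_integral_x_gegenbauer:
  assumes "l > -1/2"
  shows "weighted_integral l (\<lambda>x. x * gegenbauer l (Suc (Suc m)) x) = 0"
proof -
  define a where "a = 2 * (real m + 2 + l)"
  have "a * (x * gegenbauer l (Suc (Suc m)) x) =
      (real m + 3) * gegenbauer l (Suc (Suc (Suc m))) x
      + (real m + 1 + 2 * l) * gegenbauer l (Suc m) x" for x
    using gegenbauer.simps(3)[of l "Suc m" x] by (simp add: a_def field_simps del: gegenbauer.simps)
  then have "a * weighted_integral l (\<lambda>x. x * gegenbauer l (Suc (Suc m)) x) =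
      weighted_integral l (\<lambda>x. (real m + 3) * gegenbauer l (Suc (Suc (Suc m))) x
        + (real m + 1 + 2 * l) * gegenbauer l (Suc m) x)"
    by (simp del: gegenbauer.simps add: weighted_integral_cmult[symmetric])
  also have "\<dots> = 0"
    by (subst weighted_integral_linear)
      (use assms in \<open>auto intro!: continuous_intros simp: weighted_integral_gegenbauer\<close>)
  finally show ?thesis
    using assms by (simp add: a_def)
qed

lemma weighted_integral_x:
  assumes "l > -1/2" and "l \<noteq> 0"
  shows "weighted_integral l (\<lambda>x. x) = 0"
proof -
  have "2 * l * weighted_integral l (\<lambda>x. x) = weighted_integral l (gegenbauer l (Suc 0))"
    unfolding weighted_integral_cmult[symmetric] by (rule weighted_integral_cong) simp
  then show ?thesis
    using assms by (simp add: weighted_integral_gegenbauer)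
qed

lemma weighted_integral_x_squared:
  assumes "l > -1/2" and "l \<noteq> 0"
  shows "weighted_integral l (\<lambda>x. x^2) = weighted_integral l (\<lambda>_. 1) / (2 * (l + 1))"
proof -
  have "0 = weighted_integral l (gegenbauer l (Suc (Suc 0)))"
    using assms(1) by (simp add: weighted_integral_gegenbauer)
  also have "\<dots> = weighted_integral l (\<lambda>x. (2 * l * (l + 1)) * x^2 + (- l) * 1)"
    by (rule weighted_integral_cong) (simp add: power2_eq_square field_simps)
  also have "\<dots> = l * (2 * (l + 1) * weighted_integral l (\<lambda>x. x^2) - weighted_integral l (\<lambda>_. 1))"
    by (subst weighted_integral_linear) (use assms(1) in \<open>auto intro!: continuous_intros simp: algebra_simps\<close>)
  finally have "2 * (l + 1) * weighted_integral l (\<lambda>x. x^2) = weighted_integral l (\<lambda>_. 1)"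
    using assms(2) by simp
  then show ?thesis
    using assms(1) by (simp add: field_simps)
qed

lemma weighted_integral_deriv_gegenbauer:
  assumes l: "l > -1/2" "l \<noteq> 0" and s: "\<bar>s\<bar> = 1"
  shows "weighted_integral l (\<lambda>x. (1 + s * x) * gegenbauer_deriv l (Suc m) x)
    = s ^ m * (2 * l * weighted_integral l (\<lambda>_. 1))"
proof (induction m rule: nat_induct2)
  case 0
  have "weighted_integral l (\<lambda>x. (1 + s * x) * gegenbauer_deriv l (Suc 0) x)
      = weighted_integral l (\<lambda>x. (2 * l) * 1 + (2 * l * s) * x)"
    by (rule weighted_integral_cong) (simp add: algebra_simps)
  also have "\<dots> = 2 * l * weighted_integral l (\<lambda>_. 1)"
    by (subst weighted_integral_linear) (use l in \<open>auto intro!: continuous_intros simp: weighted_integral_x\<close>)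
  finally show ?case
    by simp
next
  case 1
  have "weighted_integral l (\<lambda>x. (1 + s * x) * gegenbauer_deriv l (Suc 1) x)
      = weighted_integral l (\<lambda>x. (4 * l * (l + 1)) * x + (4 * l * (l + 1) * s) * x^2)"
    by (rule weighted_integral_cong) (simp add: power2_eq_square algebra_simps)
  also have "\<dots> = 4 * l * (l + 1) * s * (weighted_integral l (\<lambda>_. 1) / (2 * (l + 1)))"
    by (subst weighted_integral_linear)
      (use l in \<open>auto intro!: continuous_intros simp: weighted_integral_x weighted_integral_x_squared\<close>)
  also have "\<dots> = s ^ 1 * (2 * l * weighted_integral l (\<lambda>_. 1))"
    using l by (simp add: field_simps)
  finally show ?case .
next
  case (step m)
  define a where "a = 2 * (real (Suc m) + 1 + l)"
  have "weighted_integral l (\<lambda>x. (1 + s * x) * gegenbauer l (Suc (Suc m)) x)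
      = weighted_integral l
          (\<lambda>x. 1 * gegenbauer l (Suc (Suc m)) x + s * (x * gegenbauer l (Suc (Suc m)) x))"
    by (rule weighted_integral_cong) (simp del: gegenbauer.simps add: algebra_simps)
  also have "\<dots> = 0"
    by (subst weighted_integral_linear) (use l in \<open>auto simp del: gegenbauer.simps intro!: continuous_intros
        simp: weighted_integral_gegenbauer weighted_integral_x_gegenbauer\<close>)
  finally have orth: "weighted_integral l (\<lambda>x. (1 + s * x) * gegenbauer l (Suc (Suc m)) x) = 0" .
  have "weighted_integral l (\<lambda>x. (1 + s * x) * gegenbauer_deriv l (Suc (m + 2)) x)
      = weighted_integral l (\<lambda>x. 1 * ((1 + s * x) * gegenbauer_deriv l (Suc m) x)
          + a * ((1 + s * x) * gegenbauer l (Suc (Suc m)) x))"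
    by (rule weighted_integral_cong)
      (simp del: gegenbauer.simps gegenbauer_deriv.simps
        add: gegenbauer_deriv_Suc_Suc[of l "Suc m"] a_def algebra_simps)
  also have "\<dots> = 1 * weighted_integral l (\<lambda>x. (1 + s * x) * gegenbauer_deriv l (Suc m) x)
      + a * weighted_integral l (\<lambda>x. (1 + s * x) * gegenbauer l (Suc (Suc m)) x)"
    by (rule weighted_integral_linear) (use l in \<open>auto intro!: continuous_intros\<close>)
  also have "\<dots> = s ^ (m + 2) * (2 * l * weighted_integral l (\<lambda>_. 1))"
  proof -
    have "s * s = 1"
      using s by (metis abs_mult_self_eq mult_1)
    then show ?thesis
      using step.IH orth by (simp add: power_add power2_eq_square del: gegenbauer.simps)
  qed
  finally show ?case .
qed

lemma gegenbauer_h_ln_constant: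
  assumes l: "l > -1/2" "l \<noteq> 0" and n: "n \<ge> 1"
  shows "2 * l * weighted_integral l (\<lambda>_. 1) / (real n * (real n + 2 * l) * gegenbauer_h l n)
    = 4 powr l * Gamma l * Gamma (l + 1/2) / sqrt pi *
      (Gamma (real n + 1) * Gamma (real n + l + 1) /
       (real n * Gamma (real n + l) * Gamma (real n + 1 + 2 * l)))"
proof -
  have identity: "2 * l * (r * H / (l * G)) / (N * M2 * (Q * p / G^2 * (E / (A * M1))))
      = P * G * H / r * (A * (M1 * B) / (N * B * (M2 * E)))"
    if "G \<noteq> 0" "H \<noteq> 0" "A \<noteq> 0" "B \<noteq> 0" "E \<noteq> 0" "r > 0" "p = r * r" "Q > 0" "P = 2 / Q"
      "N > 0" "M1 \<noteq> 0" "M2 \<noteq> 0"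
    for G H A B E r p P Q N M1 M2 :: real
    using that l(2) by (simp add: field_simps power2_eq_square)
  have pos: "real n > 0" "real n + l > 0" "real n + 2 * l > 0"
    using n l by simp_all
  have "l \<notin> \<int>\<^sub>\<le>\<^sub>0"
    using l by (auto elim!: nonpos_Ints_cases)
  then have g1: "Gamma (l + 1) = l * Gamma l" and G: "Gamma l \<noteq> 0"
    by (simp_all add: Gamma_plus1 Gamma_nonzero)
  have g2: "Gamma (real n + l + 1) = (real n + l) * Gamma (real n + l)"
    and g3: "Gamma (real n + 1 + 2 * l) = (real n + 2 * l) * Gamma (real n + 2 * l)"
    using Gamma_plus1[of "real n + l"] Gamma_plus1[of "real n + 2 * l"] pos
    by (auto simp: nonpos_Ints_def add_ac)
  have Gamma_nz: "Gamma (l + 1/2) \<noteq> 0" "Gamma (real n + 1) \<noteq> 0"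
    "Gamma (real n + l) \<noteq> 0" "Gamma (real n + 2 * l) \<noteq> 0"
    using l pos by (simp_all add: Gamma_real_pos less_imp_neq[symmetric])
  have four: "4 powr l = 2 / 2 powr (1 - 2 * l)"
    by (simp add: four_powr powr_diff)
  show ?thesis
    unfolding weighted_integral_one[OF l(1)] gegenbauer_h_def g1 g2 g3
    by (rule identity[OF G Gamma_nz]) (use l pos four in auto)
qed

lemma gegenbauer_coeff_ln_one_minus:
  assumes l: "l > -1/2" "l \<noteq> 0" and s: "\<bar>s\<bar> = 1" and n: "n \<ge> 1"
  shows "gegenbauer_coeff l (\<lambda>x. ln (1 - s * x)) n =
    - (s ^ n) * (4 powr l * Gamma l * Gamma (l + 1/2) / sqrt pi *
      (Gamma (real n + 1) * Gamma (real n + l + 1) /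
       (real n * Gamma (real n + l) * Gamma (real n + 1 + 2 * l))))"
proof -
  obtain m where m: "n = Suc m"
    using n by (cases n) auto
  have N: "real n * (real n + 2 * l) \<noteq> 0"
    using l n by simp
  have "gegenbauer_coeff l (\<lambda>x. ln (1 - s * x)) n
      = weighted_integral l (\<lambda>x. gegenbauer l n x * ln (1 - s * x)) / gegenbauer_h l n"
    unfolding gegenbauer_coeff_def weighted_integral_def interval_integral_minus_one_one
    by (simp add: mult_ac)
  also have "weighted_integral l (\<lambda>x. gegenbauer l n x * ln (1 - s * x))
      = - s * s ^ m * (2 * l * weighted_integral l (\<lambda>_. 1)) / (real n * (real n + 2 * l))"
    using weighted_integral_gegenbauer_ln[OF l(1) s, of m] weighted_integral_deriv_gegenbauer[OF l s, of m] N
    unfolding m by (simp add: field_simps)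
  also have "\<dots> / gegenbauer_h l n
      = - (s ^ n) *
        (2 * l * weighted_integral l (\<lambda>_. 1) / (real n * (real n + 2 * l) * gegenbauer_h l n))"
    by (simp add: m)
  finally show ?thesis
    unfolding gegenbauer_h_ln_constant[OF l n] .
qed

theorem lemmaA2:
  fixes l :: real and n :: nat
  assumes "l > -1/2" and "l \<noteq> 0" and "n \<ge> 1"
  defines "K \<equiv> 4 powr l * Gamma l * Gamma (l + 1/2) / sqrt pi *
      (Gamma (real n + 1) * Gamma (real n + l + 1) /
       (real n * Gamma (real n + l) * Gamma (real n + 1 + 2 * l)))"
  shows "gegenbauer_coeff l (\<lambda>x. ln (1 - x)) n = - K \<and>
         gegenbauer_coeff l (\<lambda>x. ln (1 + x)) n = (-1) ^ (n + 1) * K"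
proof -
  have "gegenbauer_coeff l (\<lambda>x. ln (1 - 1 * x)) n = - (1 ^ n) * K"
    and "gegenbauer_coeff l (\<lambda>x. ln (1 - (-1) * x)) n = - ((-1) ^ n) * K"
    unfolding K_def using assms by (intro gegenbauer_coeff_ln_one_minus; simp)+
  then show ?thesis
    by simp
qed

end
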